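(* Let $n\ge2$ and $1\le j\le n+2$ be integers. For every $\lambda\in[1/n,\infty)$, $$\frac{\lambda}{(1+\lambda)^{j-1}}\le\lambda_{n,j}(\lambda)=\widehat\lambda_{n,j-1}(\lambda)\le\lambda^{2-j}$$ (for $j=1$ only the outer inequalities are meant). In particular, if $j\ge3$ then $\lambda_{n,j}(\lambda)\to0$ as $\lambda\to\infty$.
   Context: For an integer $n\ge1$ let $f_n(x)=(1+x)^{n+1}/x$ for $x>0$. The function $f_n$ is strictly decreasing on $(0,1/n]$ and strictly increasing on $[1/n,\infty)$. Regular graph exponents (Schmidt–Summerer), defined algebraically. For $\lambda\in[1/n,\infty)$ let $\mu\in(0,1/n]$ be the unique solution of $f_n(\mu)=f_n(\lambda)$, and set $$\lambda_{n,j}(\lambda)=\lambda^{1-\frac{j-1}{n+1}}\mu^{\frac{j-1}{n+1}},\qquad 1\le j\le n+2 .$$ All ratios $\lambda_{n,j}/\lambda_{n,j+1}$ are equal. Put $\widehat\lambda_{n,j}(\lambda):=\lambda_{n,j+1}(\lambda)$ for $1\le j\le n+1$. These are the simultaneous approximation exponents of the regular graph in dimension $n$ with parameter $\lambda_n=\lambda$. In particular $\lambda_{n,2}(\lambda)=\widehat\lambda_n(\lambda)\le 1$. *)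

theory Defs
  imports Complex_Main
begin

definition fn :: "nat \<Rightarrow> real \<Rightarrow> real" where
  "fn n x = (1 + x) ^ (n + 1) / x"

definition mu_reg :: "nat \<Rightarrow> real \<Rightarrow> real" where
  "mu_reg n lam = (THE m. 0 < m \<and> m \<le> 1 / real n \<and> fn n m = fn n lam)"

definition lam_reg :: "nat \<Rightarrow> nat \<Rightarrow> real \<Rightarrow> real" where
  "lam_reg n j lam =
     lam powr (1 - (real j - 1) / (real n + 1)) * mu_reg n lam powr ((real j - 1) / (real n + 1))"

definition hatlam_reg :: "nat \<Rightarrow> nat \<Rightarrow> real \<Rightarrow> real" where
  "hatlam_reg n j lam = lam_reg n (j + 1) lam"

end

theory Submission imports Defs begin

text \<open>Since f_n is strictly decreasing on (0, 1/n], the defining equation f_n(\<mu>) = f_n(\<lambda>) can be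
  rewritten as \<mu> = \<lambda> q^(n+1) with q = (1+\<mu>)/(1+\<lambda>). Hence \<lambda>_{n,j}(\<lambda>) = \<lambda> q^(j-1), and
  everything follows from 1/(1+\<lambda>) \<le> q \<le> 1/\<lambda>. The lower bound holds because \<mu> > 0; the upper
  bound is equivalent to \<lambda>\<mu> \<le> 1, which follows from f_n(1/\<lambda>) \<le> f_n(\<lambda>) when \<lambda> \<ge> n and
  from \<mu> \<le> 1/n otherwise.\<close>

lemma fn_pos: "x > 0 \<Longrightarrow> fn n x > 0"
  by (simp add: fn_def)

lemma pos_if_inverse_nat_le: "n \<ge> 1 \<Longrightarrow> 1 / real n \<le> x \<Longrightarrow> 0 < x"
  by (rule less_le_trans[of _ "1 / real n"]) auto

lemma has_real_derivative_fn:
  assumes "x > 0"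
  shows "(fn n has_real_derivative (1 + x) ^ n * (real n * x - 1) / x\<^sup>2) (at x)"
proof -
  have "((\<lambda>x. (1 + x) ^ (n + 1) / x) has_real_derivative
         ((real (n + 1) * (1 + x) ^ n * 1) * x - (1 + x) ^ (n + 1) * 1) / (x * x)) (at x)"
    using assms by (intro derivative_eq_intros) auto
  moreover have "((real (n + 1) * (1 + x) ^ n * 1) * x - (1 + x) ^ (n + 1) * 1) / (x * x)
                   = (1 + x) ^ n * (real n * x - 1) / x\<^sup>2"
    using assms by (simp add: field_simps power2_eq_square)
  ultimately show ?thesis
    unfolding fn_def [abs_def] by simp
qed

lemma continuous_on_fn: "0 < a \<Longrightarrow> continuous_on {a..b} (fn n)"
  by (intro continuous_at_imp_continuous_on ballI DERIV_isCont[OF has_real_derivative_fn]) auto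

lemma fn_strict_decreasing:
  assumes "n \<ge> 1" "0 < a" "a < b" "b \<le> 1 / real n"
  shows "fn n b < fn n a"
proof (rule DERIV_neg_imp_decreasing_open[OF \<open>a < b\<close> _ continuous_on_fn[OF \<open>0 < a\<close>]])
  fix x assume x: "a < x" "x < b"
  have "x < 1 / real n" "0 < real n"
    using x assms by auto
  then have "real n * x < 1"
    by (simp add: pos_less_divide_eq mult.commute)
  then have "(1 + x) ^ n * (real n * x - 1) / x\<^sup>2 < 0"
    using x assms by (simp add: divide_neg_pos mult_pos_neg)
  then show "\<exists>y. DERIV (fn n) x :> y \<and> y < 0"
    using has_real_derivative_fn[of x n] x assms by auto
qed

lemma fn_increasing:
  assumes "n \<ge> 1" "1 / real n \<le> a" "a \<le> b"
  shows "fn n a \<le> fn n b"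
proof -
  have a_pos: "0 < a"
    using assms pos_if_inverse_nat_le by auto
  show ?thesis
  proof (rule DERIV_nonneg_imp_increasing_open[OF \<open>a \<le> b\<close> _ continuous_on_fn[OF a_pos]])
    fix x assume x: "a < x" "x < b"
    have "1 / real n \<le> x" "0 < real n"
      using x assms by auto
    then have "1 \<le> real n * x"
      by (simp add: pos_divide_le_eq mult.commute)
    then have "(1 + x) ^ n * (real n * x - 1) / x\<^sup>2 \<ge> 0"
      using x a_pos by simp
    then show "\<exists>y. DERIV (fn n) x :> y \<and> y \<ge> 0"
      using has_real_derivative_fn[of x n] x a_pos by auto
  qed
qed

lemma inverse_le_fn: "x > 0 \<Longrightarrow> 1 / x \<le> fn n x"
  unfolding fn_def by (intro divide_right_mono one_le_power) auto

lemma ex1_mu_reg: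
  assumes n: "n \<ge> 1" and lam: "1 / real n \<le> lam"
  shows "\<exists>!m. 0 < m \<and> m \<le> 1 / real n \<and> fn n m = fn n lam"
proof -
  have lam_pos: "lam > 0"
    using pos_if_inverse_nat_le[OF n lam] .
  define e where "e = min (1 / real n) (1 / fn n lam)"
  have e_pos: "e > 0"
    using n fn_pos[OF lam_pos] by (simp add: e_def)
  have "fn n lam \<le> 1 / e"
    using e_pos fn_pos[OF lam_pos] by (simp add: e_def min_def field_simps)
  then have upper: "fn n lam \<le> fn n e"
    using inverse_le_fn[OF e_pos, of n] by linarith
  have lower: "fn n (1 / real n) \<le> fn n lam"
    using fn_increasing[OF n order_refl lam] .
  obtain m where m: "e \<le> m" "m \<le> 1 / real n" "fn n m = fn n lam"
    using IVT2'[OF lower upper _ continuous_on_fn[OF e_pos]] e_def by auto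
  show ?thesis
  proof (rule ex1I[of _ m])
    fix m' assume m': "0 < m' \<and> m' \<le> 1 / real n \<and> fn n m' = fn n lam"
    show "m' = m"
      using fn_strict_decreasing[OF n, of m' m] fn_strict_decreasing[OF n, of m m'] m m' e_pos
      by (cases m' m rule: linorder_cases) auto
  qed (use m e_pos in auto)
qed

lemma mu_reg:
  assumes "n \<ge> 1" "1 / real n \<le> lam"
  shows "0 < mu_reg n lam" "mu_reg n lam \<le> 1 / real n" "fn n (mu_reg n lam) = fn n lam"
  using theI'[OF ex1_mu_reg[OF assms]] unfolding mu_reg_def by auto

lemma fn_eq_imp_eq_ratio_power:
  assumes "0 < m" "0 < l" "fn n m = fn n l"
  shows "m = l * ((1 + m) / (1 + l)) ^ (n + 1)"
proof -
  have "m * (1 + l) ^ (n + 1) = l * (1 + m) ^ (n + 1)"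
    using assms by (simp add: fn_def field_simps)
  then show ?thesis
    using assms by (simp add: power_divide eq_divide_eq)
qed

lemma lam_mu_reg_le_1:
  assumes n: "n \<ge> 1" and lam: "1 / real n \<le> lam"
  shows "lam * mu_reg n lam \<le> 1"
proof (cases "lam \<ge> real n")
  case True
  have lam_ge_1: "lam \<ge> 1"
    using True n by linarith
  have "fn n (1 / lam) = (1 + lam) ^ (n + 1) / lam ^ n"
    using lam_ge_1 by (simp add: fn_def field_simps power_divide)
  also have "\<dots> \<le> (1 + lam) ^ (n + 1) / lam"
    using lam_ge_1 n by (intro divide_left_mono) (auto simp: power_increasing[of 1 n lam, simplified])
  finally have "fn n (1 / lam) \<le> fn n (mu_reg n lam)"
    using mu_reg(3)[OF n lam] by (simp add: fn_def)
  moreover have "1 / lam \<le> 1 / real n"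
    using True n by (simp add: frac_le)
  ultimately have "mu_reg n lam \<le> 1 / lam"
    using fn_strict_decreasing[OF n, of "1 / lam" "mu_reg n lam"] lam_ge_1 mu_reg(2)[OF n lam]
    by (cases "mu_reg n lam \<le> 1 / lam") auto
  then show ?thesis
    using lam_ge_1 by (simp add: field_simps)
next
  case False
  then have "mu_reg n lam \<le> 1 / lam"
    using mu_reg(2)[OF n lam] pos_if_inverse_nat_le[OF n lam] by (simp add: frac_le order_trans)
  then show ?thesis
    using pos_if_inverse_nat_le[OF n lam] by (simp add: field_simps)
qed

lemma lam_reg_eq_ratio_power:
  assumes n: "n \<ge> 1" and lam: "1 / real n \<le> lam" and j: "j \<ge> 1"
  shows "lam_reg n j lam = lam * ((1 + mu_reg n lam) / (1 + lam)) ^ (j - 1)"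
proof -
  define m q e where "m = mu_reg n lam" and "q = (1 + m) / (1 + lam)"
    and "e = (real j - 1) / (real n + 1)"
  have lam_pos: "lam > 0"
    using pos_if_inverse_nat_le[OF n lam] .
  have m_pos: "m > 0"
    using mu_reg(1)[OF n lam] by (simp add: m_def)
  have q_pos: "q > 0"
    using m_pos lam_pos by (simp add: q_def)
  have "m = lam * q ^ (n + 1)"
    using fn_eq_imp_eq_ratio_power[OF m_pos lam_pos] mu_reg(3)[OF n lam] by (simp add: m_def q_def)
  then have "m powr e = lam powr e * (q ^ (n + 1)) powr e"
    using lam_pos q_pos by (simp add: powr_mult)
  also have "(q ^ (n + 1)) powr e = q powr (real (n + 1) * e)"
    using q_pos by (subst powr_realpow[symmetric]) (auto simp: powr_powr simp del: of_nat_Suc)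
  also have "real (n + 1) * e = real (j - 1)"
    using j by (simp add: e_def of_nat_diff add.commute[of 1])
  finally have "m powr e = lam powr e * q ^ (j - 1)"
    using q_pos by (simp add: powr_realpow)
  then have "lam_reg n j lam = (lam powr (1 - e) * lam powr e) * q ^ (j - 1)"
    by (simp add: lam_reg_def e_def m_def)
  also have "lam powr (1 - e) * lam powr e = lam"
    using lam_pos by (simp flip: powr_add)
  finally show ?thesis
    by (simp add: q_def m_def)
qed

lemma lam_reg_bounds:
  assumes n: "n \<ge> 1" and lam: "1 / real n \<le> lam" and j: "j \<ge> 1"
  shows "lam / (1 + lam) ^ (j - 1) \<le> lam_reg n j lam" "lam_reg n j lam \<le> lam powr (2 - real j)"
proof -
  define q where "q = (1 + mu_reg n lam) / (1 + lam)"
  have lam_pos: "lam > 0"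
    using pos_if_inverse_nat_le[OF n lam] .
  have q_lower: "1 / (1 + lam) \<le> q"
    using mu_reg(1)[OF n lam] lam_pos by (simp add: q_def divide_right_mono)
  have q_upper: "q \<le> 1 / lam"
    using lam_mu_reg_le_1[OF n lam] lam_pos by (simp add: q_def field_simps)
  have lam_reg: "lam_reg n j lam = lam * q ^ (j - 1)"
    using lam_reg_eq_ratio_power[OF n lam j] by (simp add: q_def)
  have "lam * (1 / (1 + lam)) ^ (j - 1) \<le> lam * q ^ (j - 1)"
    using q_lower lam_pos by (intro mult_left_mono power_mono) auto
  then show "lam / (1 + lam) ^ (j - 1) \<le> lam_reg n j lam"
    by (simp add: lam_reg power_divide)
  have "lam * q ^ (j - 1) \<le> lam * (1 / lam) ^ (j - 1)"
    using q_lower q_upper lam_pos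
    by (intro mult_left_mono power_mono) (auto intro: order_trans[rotated])
  also have "\<dots> = lam powr 1 / lam powr real (j - 1)"
    using lam_pos by (simp add: powr_realpow power_divide)
  also have "\<dots> = lam powr (2 - real j)"
    using j by (simp only: of_nat_diff flip: powr_diff) (simp add: algebra_simps)
  finally show "lam_reg n j lam \<le> lam powr (2 - real j)"
    by (simp add: lam_reg)
qed

lemma lam_reg_tendsto_0:
  assumes "n \<ge> 1" "j \<ge> 3"
  shows "((\<lambda>lam. lam_reg n j lam) \<longlongrightarrow> 0) at_top"
proof (rule tendsto_sandwich[of "\<lambda>_. 0" _ _ "\<lambda>lam. lam powr (2 - real j)"])
  have large: "eventually (\<lambda>lam. 1 / real n \<le> lam) at_top"
    by (rule eventually_ge_at_top)
  show "eventually (\<lambda>lam. 0 \<le> lam_reg n j lam) at_top"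
    using large
  proof eventually_elim
    case (elim lam)
    then have "0 \<le> lam / (1 + lam) ^ (j - 1)"
      using pos_if_inverse_nat_le[OF \<open>n \<ge> 1\<close>, of lam] by simp
    also have "\<dots> \<le> lam_reg n j lam"
      using lam_reg_bounds(1)[OF \<open>n \<ge> 1\<close> elim] assms by simp
    finally show ?case .
  qed
  show "eventually (\<lambda>lam. lam_reg n j lam \<le> lam powr (2 - real j)) at_top"
    using large by eventually_elim (use lam_reg_bounds(2)[OF \<open>n \<ge> 1\<close>] assms in auto)
  show "((\<lambda>lam. lam powr (2 - real j)) \<longlongrightarrow> 0) at_top"
    using assms by (intro tendsto_neg_powr filterlim_ident) auto
qed simp

theorem proposition2p4:
  fixes n j :: nat
  assumes "n \<ge> 2" and "1 \<le> j" and "j \<le> n + 2"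
  shows "(\<forall>lam::real. lam \<ge> 1 / real n \<longrightarrow>
            lam / (1 + lam) ^ (j - 1) \<le> lam_reg n j lam
          \<and> lam_reg n j lam \<le> lam powr (2 - real j)
          \<and> (j \<ge> 2 \<longrightarrow> lam_reg n j lam = hatlam_reg n (j - 1) lam))
       \<and> (j \<ge> 3 \<longrightarrow> ((\<lambda>lam. lam_reg n j lam) \<longlongrightarrow> 0) at_top)"
proof -
  have n: "n \<ge> 1"
    using assms(1) by simp
  show ?thesis
    using lam_reg_bounds[OF n _ assms(2)] lam_reg_tendsto_0[OF n]
    by (auto simp: hatlam_reg_def)
qed

end
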